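(* Let $G$ be a finite group acting (on the right, by functors) on a finite category $\mathcal S$, and let $\mathcal S_{hG}$ be the homotopy orbit category (Grothendieck construction), so that $|\mathcal S_{hG}(a,b)|=\sum_{g\in G}|\mathcal S(a,bg^{-1})|$. Let $\mathcal F$ be a finite category with the same objects as $\mathcal S$ and let $d_\bullet,t^\bullet:\mathrm{Ob}(\mathcal S)\to\mathbb Q$ be functions such that $d_a|\mathcal F(a,b)|t^b=|\mathcal S_{hG}(a,b)|$ for all objects $a,b$. (1) If $m^\bullet:\mathrm{Ob}(\mathcal S)\to\mathbb Q$ satisfies $\sum_b|\mathcal S(a,b)|m^b=d_a$ for all $a$, and $d_\bullet$ is $G$-invariant, then $|G|^{-1}t^\bullet m^\bullet$ is a weighting for $\mathcal F$. (2) If $m_\bullet:\mathrm{Ob}(\mathcal S)\to\mathbb Q$ satisfies $\sum_a m_a|\mathcal S(a,b)|=t^b$ for all $b$, and $t^\bullet$ is $G$-invariant, then $|G|^{-1}m_\bullet d_\bullet$ is a coweighting for $\mathcal F$. (3) Suppose $\mathcal S$ has Möbius inversion, i.e. the matrix $(|\mathcal S(a,b)|)_{a,b}$ is invertible with inverse $\mu$. If $d_\bullet$ is $G$-invariant then $k^a=|G|^{-1}\sum_b t^a\mu(a,b)d_b$ is a weighting for $\mathcal F$, and if $t^\bullet$ is $G$-invariant then $k_b=|G|^{-1}\sum_a t^a\mu(a,b)d_b$ is a coweighting for $\mathcal F$.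
   Context: The homotopy orbit category $\mathcal S_{hG}$ has the same objects as $\mathcal S$ and morphisms $a\to b$ the pairs $(g,\varphi)$ with $g\in G$ and $\varphi\in\mathcal S(ag,b)$; since $G$ acts by functors, $|\mathcal S(ag,b)|=|\mathcal S(a,bg^{-1})|$. A function on objects is $G$-invariant if it is constant on $G$-orbits. For a finite category $\mathcal C$, a weighting is $k^\bullet:\mathrm{Ob}(\mathcal C)\to\mathbb Q$ with $\sum_b|\mathcal C(a,b)|k^b=1$ for all objects $a$, and a coweighting is $k_\bullet$ with $\sum_ak_a|\mathcal C(a,b)|=1$ for all objects $b$. *)

theory Defs
  imports Complex_Main "HOL-Algebra.Group"
begin

record ('o, 'm) category =
  Obj :: "'o set"
  Hom :: "'o \<Rightarrow> 'o \<Rightarrow> 'm set"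
  Id  :: "'o \<Rightarrow> 'm"
  Comp :: "'m \<Rightarrow> 'm \<Rightarrow> 'm"   (* Comp g f = g \<circ> f *)

definition category :: "('o, 'm, 'x) category_scheme \<Rightarrow> bool" where
  "category C \<longleftrightarrow>
     (\<forall>a\<in>Obj C. Id C a \<in> Hom C a a) \<and>
     (\<forall>a\<in>Obj C. \<forall>b\<in>Obj C. \<forall>c\<in>Obj C. \<forall>f\<in>Hom C a b. \<forall>g\<in>Hom C b c.
         Comp C g f \<in> Hom C a c) \<and>
     (\<forall>a\<in>Obj C. \<forall>b\<in>Obj C. \<forall>f\<in>Hom C a b.
         Comp C (Id C b) f = f \<and> Comp C f (Id C a) = f) \<and>
     (\<forall>a\<in>Obj C. \<forall>b\<in>Obj C. \<forall>c\<in>Obj C. \<forall>d\<in>Obj C.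
        \<forall>f\<in>Hom C a b. \<forall>g\<in>Hom C b c. \<forall>h\<in>Hom C c d.
         Comp C h (Comp C g f) = Comp C (Comp C h g) f) \<and>
     (\<forall>a\<in>Obj C. \<forall>b\<in>Obj C. \<forall>a'\<in>Obj C. \<forall>b'\<in>Obj C.
         (a, b) \<noteq> (a', b') \<longrightarrow> Hom C a b \<inter> Hom C a' b' = {})"

definition finite_category :: "('o, 'm, 'x) category_scheme \<Rightarrow> bool" where
  "finite_category C \<longleftrightarrow> category C \<and> finite (Obj C) \<and>
     (\<forall>a\<in>Obj C. \<forall>b\<in>Obj C. finite (Hom C a b))"

definition right_action_by_functors ::
  "('g, 'y) monoid_scheme \<Rightarrow> ('o, 'm, 'x) category_scheme \<Rightarrow>
   ('o \<Rightarrow> 'g \<Rightarrow> 'o) \<Rightarrow> ('m \<Rightarrow> 'g \<Rightarrow> 'm) \<Rightarrow> bool" where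
  "right_action_by_functors G C actO actM \<longleftrightarrow>
     (\<forall>g\<in>carrier G. \<forall>a\<in>Obj C. actO a g \<in> Obj C) \<and>
     (\<forall>g\<in>carrier G. \<forall>a\<in>Obj C. \<forall>b\<in>Obj C. \<forall>f\<in>Hom C a b.
         actM f g \<in> Hom C (actO a g) (actO b g)) \<and>
     (\<forall>g\<in>carrier G. \<forall>a\<in>Obj C. actM (Id C a) g = Id C (actO a g)) \<and>
     (\<forall>g\<in>carrier G. \<forall>a\<in>Obj C. \<forall>b\<in>Obj C. \<forall>c\<in>Obj C. \<forall>f\<in>Hom C a b. \<forall>h\<in>Hom C b c.
         actM (Comp C h f) g = Comp C (actM h g) (actM f g)) \<and>
     (\<forall>a\<in>Obj C. actO a \<one>\<^bsub>G\<^esub> = a) \<and>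
     (\<forall>a\<in>Obj C. \<forall>b\<in>Obj C. \<forall>f\<in>Hom C a b. actM f \<one>\<^bsub>G\<^esub> = f) \<and>
     (\<forall>g\<in>carrier G. \<forall>h\<in>carrier G. \<forall>a\<in>Obj C.
         actO a (g \<otimes>\<^bsub>G\<^esub> h) = actO (actO a g) h) \<and>
     (\<forall>g\<in>carrier G. \<forall>h\<in>carrier G. \<forall>a\<in>Obj C. \<forall>b\<in>Obj C. \<forall>f\<in>Hom C a b.
         actM f (g \<otimes>\<^bsub>G\<^esub> h) = actM (actM f g) h)"

definition hG_Hom ::
  "('g, 'y) monoid_scheme \<Rightarrow> ('o, 'm, 'x) category_scheme \<Rightarrow>
   ('o \<Rightarrow> 'g \<Rightarrow> 'o) \<Rightarrow> 'o \<Rightarrow> 'o \<Rightarrow> ('g \<times> 'm) set" where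
  "hG_Hom G C actO a b = Sigma (carrier G) (\<lambda>g. Hom C (actO a g) b)"

definition G_invariant ::
  "('g, 'y) monoid_scheme \<Rightarrow> ('o, 'm, 'x) category_scheme \<Rightarrow>
   ('o \<Rightarrow> 'g \<Rightarrow> 'o) \<Rightarrow> ('o \<Rightarrow> rat) \<Rightarrow> bool" where
  "G_invariant G C actO f \<longleftrightarrow> (\<forall>g\<in>carrier G. \<forall>a\<in>Obj C. f (actO a g) = f a)"

definition weighting :: "('o, 'm, 'x) category_scheme \<Rightarrow> ('o \<Rightarrow> rat) \<Rightarrow> bool" where
  "weighting C k \<longleftrightarrow>
     (\<forall>a\<in>Obj C. (\<Sum>b\<in>Obj C. of_nat (card (Hom C a b)) * k b) = 1)"

definition coweighting :: "('o, 'm, 'x) category_scheme \<Rightarrow> ('o \<Rightarrow> rat) \<Rightarrow> bool" where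
  "coweighting C k \<longleftrightarrow>
     (\<forall>b\<in>Obj C. (\<Sum>a\<in>Obj C. k a * of_nat (card (Hom C a b))) = 1)"

definition moebius_inverse :: "('o, 'm, 'x) category_scheme \<Rightarrow> ('o \<Rightarrow> 'o \<Rightarrow> rat) \<Rightarrow> bool" where
  "moebius_inverse C mu \<longleftrightarrow>
     (\<forall>a\<in>Obj C. \<forall>c\<in>Obj C.
        (\<Sum>b\<in>Obj C. of_nat (card (Hom C a b)) * mu b c) = (if a = c then 1 else 0)) \<and>
     (\<forall>a\<in>Obj C. \<forall>c\<in>Obj C.
        (\<Sum>b\<in>Obj C. mu a b * of_nat (card (Hom C b c))) = (if a = c then 1 else 0))"

end

theory Submission
  imports Defs
begin

text \<open>Counting morphisms of \<open>S\<^sub>h\<^sub>G\<close> out of \<open>a\<close> groups them by \<open>g \<in> G\<close>: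
  \<open>\<Sum>\<^sub>b |S\<^sub>h\<^sub>G(a,b)| m\<^sup>b = \<Sum>\<^sub>g \<Sum>\<^sub>b |S(ag,b)| m\<^sup>b = |G| d\<^sub>a\<close> when \<open>m\<^sup>\<bullet>\<close> solves
  \<open>|S| m\<^sup>\<bullet> = d\<^sub>\<bullet>\<close> and \<open>d\<^sub>\<bullet>\<close> is \<open>G\<close>-invariant. Dividing the factorisation
  \<open>d\<^sub>a |F(a,b)| t\<^sup>b = |S\<^sub>h\<^sub>G(a,b)|\<close> by \<open>d\<^sub>a\<close>, which is nonzero because \<open>S\<^sub>h\<^sub>G(a,a)\<close>
  contains the identity, yields the weighting. Coweightings are dual, using
  \<open>|S(ag,b)| = |S(a,bg\<^sup>-\<^sup>1)|\<close>, and Moebius inversion supplies the solutions \<open>m\<close>.\<close>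

lemma moebius_inverse_right_solution:
  assumes mu: "moebius_inverse C mu" and fin: "finite (Obj C)" and a: "a \<in> Obj C"
  shows "(\<Sum>b\<in>Obj C. of_nat (card (Hom C a b)) * (\<Sum>c\<in>Obj C. mu b c * d c)) = d a"
proof -
  have "(\<Sum>b\<in>Obj C. of_nat (card (Hom C a b)) * (\<Sum>c\<in>Obj C. mu b c * d c))
      = (\<Sum>c\<in>Obj C. (\<Sum>b\<in>Obj C. of_nat (card (Hom C a b)) * mu b c) * d c)"
    by (simp only: sum_distrib_left sum_distrib_right mult.assoc) (rule sum.swap)
  also have "\<dots> = (\<Sum>c\<in>Obj C. if a = c then d c else 0)"
    using mu a unfolding moebius_inverse_def by (intro sum.cong) auto
  finally show ?thesis
    using a fin by simp
qed

lemma moebius_inverse_left_solution: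
  assumes mu: "moebius_inverse C mu" and fin: "finite (Obj C)" and b: "b \<in> Obj C"
  shows "(\<Sum>a\<in>Obj C. (\<Sum>c\<in>Obj C. t c * mu c a) * of_nat (card (Hom C a b))) = t b"
proof -
  have "(\<Sum>a\<in>Obj C. (\<Sum>c\<in>Obj C. t c * mu c a) * of_nat (card (Hom C a b)))
      = (\<Sum>c\<in>Obj C. t c * (\<Sum>a\<in>Obj C. mu c a * of_nat (card (Hom C a b))))"
    by (simp only: sum_distrib_left sum_distrib_right mult.assoc) (rule sum.swap)
  also have "\<dots> = (\<Sum>c\<in>Obj C. if c = b then t c else 0)"
    using mu b unfolding moebius_inverse_def by (intro sum.cong) auto
  finally show ?thesis
    using b fin by simp
qed

locale finite_group_acting_on_category = group G for G :: "('g, 'y) monoid_scheme" (structure) +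
  fixes S :: "('o, 'm, 'x) category_scheme"
    and actO :: "'o \<Rightarrow> 'g \<Rightarrow> 'o" and actM :: "'m \<Rightarrow> 'g \<Rightarrow> 'm"
  assumes finite_carrier: "finite (carrier G)"
    and finite_category_S: "finite_category S"
    and action: "right_action_by_functors G S actO actM"
begin

lemma finite_Obj: "finite (Obj S)"
  using finite_category_S by (simp add: finite_category_def)

lemma finite_Hom: "a \<in> Obj S \<Longrightarrow> b \<in> Obj S \<Longrightarrow> finite (Hom S a b)"
  using finite_category_S by (simp add: finite_category_def)

lemma Id_in_Hom: "a \<in> Obj S \<Longrightarrow> Id S a \<in> Hom S a a"
  using finite_category_S by (simp add: finite_category_def category_def)

lemma actO_closed: "g \<in> carrier G \<Longrightarrow> a \<in> Obj S \<Longrightarrow> actO a g \<in> Obj S"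
  using action by (simp add: right_action_by_functors_def)

lemma actM_closed:
  "g \<in> carrier G \<Longrightarrow> a \<in> Obj S \<Longrightarrow> b \<in> Obj S \<Longrightarrow> f \<in> Hom S a b
    \<Longrightarrow> actM f g \<in> Hom S (actO a g) (actO b g)"
  using action by (simp add: right_action_by_functors_def)

lemma actO_one: "a \<in> Obj S \<Longrightarrow> actO a \<one> = a"
  using action by (simp add: right_action_by_functors_def)

lemma actM_one: "a \<in> Obj S \<Longrightarrow> b \<in> Obj S \<Longrightarrow> f \<in> Hom S a b \<Longrightarrow> actM f \<one> = f"
  using action by (simp add: right_action_by_functors_def)

lemma actO_mult:
  "g \<in> carrier G \<Longrightarrow> h \<in> carrier G \<Longrightarrow> a \<in> Obj S \<Longrightarrow> actO a (g \<otimes> h) = actO (actO a g) h"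
  using action by (simp add: right_action_by_functors_def)

lemma actM_mult:
  "g \<in> carrier G \<Longrightarrow> h \<in> carrier G \<Longrightarrow> a \<in> Obj S \<Longrightarrow> b \<in> Obj S \<Longrightarrow> f \<in> Hom S a b
    \<Longrightarrow> actM f (g \<otimes> h) = actM (actM f g) h"
  using action by (simp add: right_action_by_functors_def)

lemma actO_actO_inv: "g \<in> carrier G \<Longrightarrow> a \<in> Obj S \<Longrightarrow> actO (actO a g) (inv g) = a"
  by (simp add: actO_mult[symmetric] actO_one)

lemma actO_inv_actO: "g \<in> carrier G \<Longrightarrow> a \<in> Obj S \<Longrightarrow> actO (actO a (inv g)) g = a"
  by (simp add: actO_mult[symmetric] actO_one)

lemma card_Hom_act_eq:
  assumes g: "g \<in> carrier G" and a: "a \<in> Obj S" and b: "b \<in> Obj S"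
  shows "card (Hom S (actO a g) b) = card (Hom S a (actO b (inv g)))"
proof -
  have ag: "actO a g \<in> Obj S" and bg: "actO b (inv g) \<in> Obj S"
    using g a b by (simp_all add: actO_closed)
  have "bij_betw (\<lambda>f. actM f (inv g)) (Hom S (actO a g) b) (Hom S a (actO b (inv g)))"
  proof (rule bij_betw_byWitness[where f' = "\<lambda>f. actM f g"])
    show "\<forall>f\<in>Hom S (actO a g) b. actM (actM f (inv g)) g = f"
      using g ag b by (simp add: actM_mult[symmetric] actM_one)
    show "\<forall>f\<in>Hom S a (actO b (inv g)). actM (actM f g) (inv g) = f"
      using g a bg by (simp add: actM_mult[symmetric] actM_one)
    show "(\<lambda>f. actM f (inv g)) ` Hom S (actO a g) b \<subseteq> Hom S a (actO b (inv g))"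
      using actM_closed[of "inv g" "actO a g" b] g a ag b by (auto simp: actO_actO_inv)
    show "(\<lambda>f. actM f g) ` Hom S a (actO b (inv g)) \<subseteq> Hom S (actO a g) b"
      using actM_closed[of g a "actO b (inv g)"] g a bg b by (auto simp: actO_inv_actO)
  qed
  then show ?thesis
    by (rule bij_betw_same_card)
qed

lemma card_hG_Hom:
  assumes "a \<in> Obj S" "b \<in> Obj S"
  shows "card (hG_Hom G S actO a b) = (\<Sum>g\<in>carrier G. card (Hom S (actO a g) b))"
  unfolding hG_Hom_def
  using assms finite_carrier by (intro card_SigmaI) (auto simp: actO_closed finite_Hom)

lemma card_hG_Hom_refl_pos:
  assumes a: "a \<in> Obj S"
  shows "card (hG_Hom G S actO a a) > 0"
proof -
  have "(\<one>, Id S a) \<in> hG_Hom G S actO a a"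
    using a by (simp add: hG_Hom_def actO_one Id_in_Hom)
  moreover have "finite (hG_Hom G S actO a a)"
    using a finite_carrier by (auto simp: hG_Hom_def actO_closed finite_Hom)
  ultimately show ?thesis
    by (auto simp: card_gt_0_iff)
qed

lemma card_carrier_nonzero: "of_nat (card (carrier G)) \<noteq> (0 :: rat)"
  using finite_carrier one_closed by (auto simp: card_eq_0_iff)

lemma sum_hG_Hom_row:
  assumes m: "\<forall>a\<in>Obj S. (\<Sum>b\<in>Obj S. of_nat (card (Hom S a b)) * m b) = d a"
    and d: "G_invariant G S actO d"
    and a: "a \<in> Obj S"
  shows "(\<Sum>b\<in>Obj S. of_nat (card (hG_Hom G S actO a b)) * m b) = of_nat (card (carrier G)) * d a"
proof -
  have "(\<Sum>b\<in>Obj S. of_nat (card (hG_Hom G S actO a b)) * m b)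
      = (\<Sum>b\<in>Obj S. \<Sum>g\<in>carrier G. of_nat (card (Hom S (actO a g) b)) * m b)"
    using a by (simp add: card_hG_Hom sum_distrib_right)
  also have "\<dots> = (\<Sum>g\<in>carrier G. \<Sum>b\<in>Obj S. of_nat (card (Hom S (actO a g) b)) * m b)"
    by (rule sum.swap)
  also have "\<dots> = (\<Sum>g\<in>carrier G. d a)"
    using m d a by (intro sum.cong) (auto simp: actO_closed G_invariant_def)
  finally show ?thesis
    by simp
qed

lemma sum_hG_Hom_column:
  assumes m: "\<forall>b\<in>Obj S. (\<Sum>a\<in>Obj S. m a * of_nat (card (Hom S a b))) = t b"
    and t: "G_invariant G S actO t"
    and b: "b \<in> Obj S"
  shows "(\<Sum>a\<in>Obj S. m a * of_nat (card (hG_Hom G S actO a b))) = of_nat (card (carrier G)) * t b"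
proof -
  have "(\<Sum>a\<in>Obj S. m a * of_nat (card (hG_Hom G S actO a b)))
      = (\<Sum>a\<in>Obj S. \<Sum>g\<in>carrier G. m a * of_nat (card (Hom S a (actO b (inv g)))))"
    using b by (intro sum.cong) (simp_all add: card_hG_Hom card_Hom_act_eq sum_distrib_left)
  also have "\<dots> = (\<Sum>g\<in>carrier G. \<Sum>a\<in>Obj S. m a * of_nat (card (Hom S a (actO b (inv g)))))"
    by (rule sum.swap)
  also have "\<dots> = (\<Sum>g\<in>carrier G. t b)"
    using m t b by (intro sum.cong) (auto simp: actO_closed G_invariant_def)
  finally show ?thesis
    by simp
qed

end

locale hG_factorization = finite_group_acting_on_category G S actO actM
  for G :: "('g, 'y) monoid_scheme" and S :: "('o, 'm, 'x) category_scheme"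
    and actO :: "'o \<Rightarrow> 'g \<Rightarrow> 'o" and actM :: "'m \<Rightarrow> 'g \<Rightarrow> 'm" +
  fixes F :: "('o, 'n, 'z) category_scheme" and d t :: "'o \<Rightarrow> rat"
  assumes Obj_F: "Obj F = Obj S"
    and factorization: "\<forall>a\<in>Obj S. \<forall>b\<in>Obj S.
      d a * of_nat (card (Hom F a b)) * t b = of_nat (card (hG_Hom G S actO a b))"
begin

lemma factor_nonzero:
  assumes "a \<in> Obj S"
  shows "d a \<noteq> 0" and "t a \<noteq> 0"
  using factorization card_hG_Hom_refl_pos[OF assms] assms by force+

lemma weighting_of_solution:
  assumes m: "\<forall>a\<in>Obj S. (\<Sum>b\<in>Obj S. of_nat (card (Hom S a b)) * m b) = d a"
    and d: "G_invariant G S actO d"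
  shows "weighting F (\<lambda>a. t a * m a / of_nat (card (carrier G)))"
  unfolding weighting_def Obj_F
proof
  fix a assume a: "a \<in> Obj S"
  define n :: rat where "n = of_nat (card (carrier G))"
  have "d a * n * (\<Sum>b\<in>Obj S. of_nat (card (Hom F a b)) * (t b * m b / n))
      = (\<Sum>b\<in>Obj S. (d a * of_nat (card (Hom F a b)) * t b) * m b)"
    using card_carrier_nonzero by (simp add: n_def sum_distrib_left field_simps)
  also have "\<dots> = n * d a"
    using factorization a sum_hG_Hom_row[OF m d a] by (simp add: n_def)
  finally show "(\<Sum>b\<in>Obj S. of_nat (card (Hom F a b)) * (t b * m b / n)) = 1"
    using factor_nonzero(1)[OF a] card_carrier_nonzero by (simp add: n_def)
qed

lemma coweighting_of_solution:
  assumes m: "\<forall>b\<in>Obj S. (\<Sum>a\<in>Obj S. m a * of_nat (card (Hom S a b))) = t b"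
    and t: "G_invariant G S actO t"
  shows "coweighting F (\<lambda>a. m a * d a / of_nat (card (carrier G)))"
  unfolding coweighting_def Obj_F
proof
  fix b assume b: "b \<in> Obj S"
  define n :: rat where "n = of_nat (card (carrier G))"
  have "t b * n * (\<Sum>a\<in>Obj S. m a * d a / n * of_nat (card (Hom F a b)))
      = (\<Sum>a\<in>Obj S. m a * (d a * of_nat (card (Hom F a b)) * t b))"
    using card_carrier_nonzero by (simp add: n_def sum_distrib_left field_simps)
  also have "\<dots> = n * t b"
    using factorization b sum_hG_Hom_column[OF m t b] by (simp add: n_def)
  finally show "(\<Sum>a\<in>Obj S. m a * d a / n * of_nat (card (Hom F a b))) = 1"
    using factor_nonzero(2)[OF b] card_carrier_nonzero by (simp add: n_def)
qed

lemma weighting_of_moebius: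
  assumes "moebius_inverse S mu" and "G_invariant G S actO d"
  shows "weighting F (\<lambda>a. (\<Sum>b\<in>Obj S. t a * mu a b * d b) / of_nat (card (carrier G)))"
  using weighting_of_solution[of "\<lambda>b. \<Sum>c\<in>Obj S. mu b c * d c"]
    moebius_inverse_right_solution[OF assms(1) finite_Obj] assms(2)
  by (simp add: sum_distrib_left mult.assoc)

lemma coweighting_of_moebius:
  assumes "moebius_inverse S mu" and "G_invariant G S actO t"
  shows "coweighting F (\<lambda>b. (\<Sum>a\<in>Obj S. t a * mu a b * d b) / of_nat (card (carrier G)))"
  using coweighting_of_solution[of "\<lambda>a. \<Sum>c\<in>Obj S. t c * mu c a"]
    moebius_inverse_left_solution[OF assms(1) finite_Obj] assms(2)
  by (simp add: sum_distrib_right)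

end

theorem theorem2p8:
  fixes G :: "('g, 'y) monoid_scheme"
    and S :: "('o, 'm, 'x) category_scheme"
    and F :: "('o, 'n, 'z) category_scheme"
    and actO :: "'o \<Rightarrow> 'g \<Rightarrow> 'o" and actM :: "'m \<Rightarrow> 'g \<Rightarrow> 'm"
    and d t :: "'o \<Rightarrow> rat"
  assumes "group G" and "finite (carrier G)"
    and "finite_category S"
    and "right_action_by_functors G S actO actM"
    and "finite_category F" and "Obj F = Obj S"
    and "\<forall>a\<in>Obj S. \<forall>b\<in>Obj S.
           d a * of_nat (card (Hom F a b)) * t b = of_nat (card (hG_Hom G S actO a b))"
  shows
   "(\<forall>m :: 'o \<Rightarrow> rat.
       (\<forall>a\<in>Obj S. (\<Sum>b\<in>Obj S. of_nat (card (Hom S a b)) * m b) = d a)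
       \<and> G_invariant G S actO d
       \<longrightarrow> weighting F (\<lambda>a. t a * m a / of_nat (card (carrier G))))
    \<and> (\<forall>m :: 'o \<Rightarrow> rat.
       (\<forall>b\<in>Obj S. (\<Sum>a\<in>Obj S. m a * of_nat (card (Hom S a b))) = t b)
       \<and> G_invariant G S actO t
       \<longrightarrow> coweighting F (\<lambda>a. m a * d a / of_nat (card (carrier G))))
    \<and> (\<forall>mu :: 'o \<Rightarrow> 'o \<Rightarrow> rat. moebius_inverse S mu \<longrightarrow>
        (G_invariant G S actO d \<longrightarrow>
           weighting F (\<lambda>a. (\<Sum>b\<in>Obj S. t a * mu a b * d b) / of_nat (card (carrier G))))
      \<and> (G_invariant G S actO t \<longrightarrow>
           coweighting F (\<lambda>b. (\<Sum>a\<in>Obj S. t a * mu a b * d b) / of_nat (card (carrier G)))))"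
proof -
  interpret hG_factorization G S actO actM F d t
    using assms by (simp add: hG_factorization_def finite_group_acting_on_category_def
        finite_group_acting_on_category_axioms_def hG_factorization_axioms_def)
  show ?thesis
    by (blast intro: weighting_of_solution coweighting_of_solution
        weighting_of_moebius coweighting_of_moebius)
qed

end
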